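(* Let $X:\Omega\to\mathbb{R}^3$ be a timelike minimal surface in $\mathbb{L}^3$ which is a smooth graph over a timelike plane $P$ (through the origin). Let $\{b_2,b_3\}$ be a basis of $P$ orthonormal with respect to $\langle\cdot,\cdot\rangle$, with $b_2$ spacelike and $b_3$ timelike, and let $b_1=N$ be the unit spacelike normal of $P$, so that $\{b_1,b_2,b_3\}$ is an orthonormal basis of $\mathbb{L}^3$. Writing the surface, via the inverse of the (diffeomorphic) orthogonal projection onto $P$, as $X(x_2,x_3)$ over points $x_2b_2+x_3b_3$ of $P$, define $\psi(x_2,x_3)=\langle X(x_2,x_3),N\rangle$, so that $X(x_2,x_3)=\psi(x_2,x_3)N+x_2b_2+x_3b_3$. Then $\psi$ satisfies the Born-Infeld equation in the variables $x_2,x_3$, i.e. $\psi$ is a Born-Infeld soliton.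
   Context: $\mathbb{L}^3$ denotes $\mathbb{R}^3$ with the metric $\langle\cdot,\cdot\rangle$ given by $ds^2=dx^2+dy^2-dz^2$. A surface is timelike if its induced metric is Lorentzian, minimal if its mean curvature vanishes. A function $\psi$ on an open set of the $(u,v)$-plane is a Born-Infeld soliton (in the variables $u,v$) if $(1-\psi_v^2)\psi_{uu}+2\psi_u\psi_v\psi_{uv}-(1+\psi_u^2)\psi_{vv}=0$. *)

theory Defs
  imports "HOL-Analysis.Analysis"
begin

definition linner :: "real^3 \<Rightarrow> real^3 \<Rightarrow> real" where
  "linner x y = x$1 * y$1 + x$2 * y$2 - x$3 * y$3"

text \<open>Lorentzian cross product: orthogonal (w.r.t. linner) to both arguments.\<close>
definition lcross :: "real^3 \<Rightarrow> real^3 \<Rightarrow> real^3" where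
  "lcross a b = vector [a$2 * b$3 - a$3 * b$2, a$3 * b$1 - a$1 * b$3, -(a$1 * b$2 - a$2 * b$1)]"

definition pd :: "bool \<Rightarrow> (real \<times> real \<Rightarrow> 'a::real_normed_vector) \<Rightarrow> real \<times> real \<Rightarrow> 'a" where
  "pd d f p = (if d then vector_derivative (\<lambda>t. f (t, snd p)) (at (fst p))
                    else vector_derivative (\<lambda>t. f (fst p, t)) (at (snd p)))"

fun iter_pd :: "bool list \<Rightarrow> (real \<times> real \<Rightarrow> 'a::real_normed_vector) \<Rightarrow> real \<times> real \<Rightarrow> 'a" where
  "iter_pd [] f = f"
| "iter_pd (d # ds) f = pd d (iter_pd ds f)"

definition smooth_on2 :: "(real \<times> real) set \<Rightarrow> (real \<times> real \<Rightarrow> 'a::real_normed_vector) \<Rightarrow> bool" where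
  "smooth_on2 U f \<longleftrightarrow> (\<forall>ds. \<forall>p\<in>U. iter_pd ds f differentiable (at p))"

definition fundE :: "(real \<times> real \<Rightarrow> real^3) \<Rightarrow> real \<times> real \<Rightarrow> real" where
  "fundE X p = linner (pd True X p) (pd True X p)"
definition fundF :: "(real \<times> real \<Rightarrow> real^3) \<Rightarrow> real \<times> real \<Rightarrow> real" where
  "fundF X p = linner (pd True X p) (pd False X p)"
definition fundG :: "(real \<times> real \<Rightarrow> real^3) \<Rightarrow> real \<times> real \<Rightarrow> real" where
  "fundG X p = linner (pd False X p) (pd False X p)"

definition timelike_surface :: "(real \<times> real) set \<Rightarrow> (real \<times> real \<Rightarrow> real^3) \<Rightarrow> bool" where
  "timelike_surface U X \<longleftrightarrow> (\<forall>p\<in>U. fundE X p * fundG X p - (fundF X p)^2 < 0)"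

definition unit_normal :: "(real \<times> real \<Rightarrow> real^3) \<Rightarrow> real \<times> real \<Rightarrow> real^3" where
  "unit_normal X p = (let n = lcross (pd True X p) (pd False X p)
                      in (1 / sqrt \<bar>linner n n\<bar>) *\<^sub>R n)"

definition mean_curvature :: "(real \<times> real \<Rightarrow> real^3) \<Rightarrow> real \<times> real \<Rightarrow> real" where
  "mean_curvature X p =
     (let n = unit_normal X p;
          e = linner (pd True (pd True X) p) n;
          f = linner (pd True (pd False X) p) n;
          g = linner (pd False (pd False X) p) n;
          E = fundE X p; F = fundF X p; G = fundG X p
      in linner n n * (e * G - 2 * f * F + g * E) / (2 * (E * G - F^2)))"

definition minimal_surface :: "(real \<times> real) set \<Rightarrow> (real \<times> real \<Rightarrow> real^3) \<Rightarrow> bool" where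
  "minimal_surface U X \<longleftrightarrow> (\<forall>p\<in>U. mean_curvature X p = 0)"

definition born_infeld_soliton :: "(real \<times> real) set \<Rightarrow> (real \<times> real \<Rightarrow> real) \<Rightarrow> bool" where
  "born_infeld_soliton U \<psi> \<longleftrightarrow>
     (\<forall>p\<in>U. (1 - (pd False \<psi> p)^2) * pd True (pd True \<psi>) p
              + 2 * pd True \<psi> p * pd False \<psi> p * pd True (pd False \<psi>) p
              - (1 + (pd True \<psi> p)^2) * pd False (pd False \<psi>) p = 0)"

end

theory Submission
  imports Defs
begin

text \<open>Over the plane spanned by \<open>b2, b3\<close> the graph \<open>X = \<psi> N + x2 b2 + x3 b3\<close> has
  \<open>X_u = \<psi>_u N + b2\<close> and \<open>X_v = \<psi>_v N + b3\<close>, so \<open>E = 1 + \<psi>_u^2\<close>, \<open>F = \<psi>_u \<psi>_v\<close> and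
  \<open>G = \<psi>_v^2 - 1\<close>, while every second derivative of \<open>X\<close> is a multiple of \<open>N\<close>.
  Since \<open>N\<close> is transversal to the surface (\<open>\<langle>N, X_u \<times> X_v\<rangle> = \<langle>N, b2 \<times> b3\<rangle> = \<plusminus>1\<close>),
  the mean curvature vanishes exactly when \<open>\<psi>_uu G - 2 \<psi>_uv F + \<psi>_vv E = 0\<close>, and this is
  the Born-Infeld equation up to sign.\<close>

lemma has_vector_derivative_pd:
  fixes f :: "real \<times> real \<Rightarrow> 'a::real_normed_vector"
  assumes "f differentiable (at p)"
  shows "((\<lambda>t. f (t, snd p)) has_vector_derivative pd True f p) (at (fst p))"
    and "((\<lambda>t. f (fst p, t)) has_vector_derivative pd False f p) (at (snd p))"
proof -
  have "(\<lambda>t. (t, snd p)) differentiable (at (fst p))" "(\<lambda>t. (fst p, t)) differentiable (at (snd p))"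
    by (auto intro: derivative_intros)
  then have "(f \<circ> (\<lambda>t. (t, snd p))) differentiable (at (fst p))"
    "(f \<circ> (\<lambda>t. (fst p, t))) differentiable (at (snd p))"
    using assms by (auto intro!: differentiable_chain_at)
  then show "((\<lambda>t. f (t, snd p)) has_vector_derivative pd True f p) (at (fst p))"
    and "((\<lambda>t. f (fst p, t)) has_vector_derivative pd False f p) (at (snd p))"
    by (simp_all add: pd_def o_def vector_derivative_works)
qed

lemma pd_cong_nhds:
  assumes "eventually (\<lambda>q. f q = g q) (nhds p)"
  shows "pd d f p = pd d g p"
proof -
  have "((\<lambda>t. (t, snd p)) \<longlongrightarrow> p) (nhds (fst p))" "((\<lambda>t. (fst p, t)) \<longlongrightarrow> p) (nhds (snd p))"
    by (auto intro!: tendsto_eq_intros filterlim_ident)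
  then have "eventually (\<lambda>t. f (t, snd p) = g (t, snd p)) (nhds (fst p))"
    "eventually (\<lambda>t. f (fst p, t) = g (fst p, t)) (nhds (snd p))"
    using assms by (auto simp: filterlim_iff)
  then show ?thesis
    unfolding pd_def by (auto intro!: vector_derivative_cong_eq)
qed

lemma pd_scaleR_add_const:
  fixes g :: "real \<times> real \<Rightarrow> real"
  assumes "g differentiable (at p)"
  shows "pd d (\<lambda>q. g q *\<^sub>R v + c) p = pd d g p *\<^sub>R v"
proof -
  have "((\<lambda>t. g (t, snd p) *\<^sub>R v + c) has_vector_derivative pd True g p *\<^sub>R v) (at (fst p))"
    "((\<lambda>t. g (fst p, t) *\<^sub>R v + c) has_vector_derivative pd False g p *\<^sub>R v) (at (snd p))"
    using has_vector_derivative_pd[OF assms]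
    by (auto intro!: derivative_eq_intros simp: has_real_derivative_iff_has_vector_derivative[symmetric])
  then show ?thesis
    by (cases d) (simp_all add: pd_def vector_derivative_at)
qed

definition plane_graph ::
    "(real \<times> real \<Rightarrow> real) \<Rightarrow> 'a::real_normed_vector \<Rightarrow> 'a \<Rightarrow> 'a \<Rightarrow> real \<times> real \<Rightarrow> 'a" where
  "plane_graph \<psi> v a b q = \<psi> q *\<^sub>R v + fst q *\<^sub>R a + snd q *\<^sub>R b"

lemma pd_plane_graph:
  assumes "\<psi> differentiable (at p)"
  shows "pd d (plane_graph \<psi> v a b) p = pd d \<psi> p *\<^sub>R v + (if d then a else b)"
proof -
  have "((\<lambda>t. plane_graph \<psi> v a b (t, snd p)) has_vector_derivative pd True \<psi> p *\<^sub>R v + a) (at (fst p))"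
    "((\<lambda>t. plane_graph \<psi> v a b (fst p, t)) has_vector_derivative pd False \<psi> p *\<^sub>R v + b) (at (snd p))"
    using has_vector_derivative_pd[OF assms] unfolding plane_graph_def
    by (auto intro!: derivative_eq_intros simp: has_real_derivative_iff_has_vector_derivative[symmetric])
  then show ?thesis
    by (cases d) (simp_all add: pd_def vector_derivative_at)
qed

lemma pd_pd_plane_graph:
  assumes "open U" "p \<in> U" "\<And>q. q \<in> U \<Longrightarrow> \<psi> differentiable (at q)"
    and "pd d \<psi> differentiable (at p)"
  shows "pd d' (pd d (plane_graph \<psi> v a b)) p = pd d' (pd d \<psi>) p *\<^sub>R v"
proof -
  have "eventually (\<lambda>q. pd d (plane_graph \<psi> v a b) q = pd d \<psi> q *\<^sub>R v + (if d then a else b)) (nhds p)"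
    using assms(1-3) by (auto simp: eventually_nhds pd_plane_graph)
  then have "pd d' (pd d (plane_graph \<psi> v a b)) p = pd d' (\<lambda>q. pd d \<psi> q *\<^sub>R v + (if d then a else b)) p"
    by (rule pd_cong_nhds)
  also have "\<dots> = pd d' (pd d \<psi>) p *\<^sub>R v"
    by (rule pd_scaleR_add_const[OF assms(4)])
  finally show ?thesis .
qed

lemma linner_commute: "linner x y = linner y x"
  by (simp add: linner_def algebra_simps)

lemma linner_add_left: "linner (x + y) z = linner x z + linner y z"
  and linner_add_right: "linner z (x + y) = linner z x + linner z y"
  and linner_scaleR_left: "linner (c *\<^sub>R x) y = c * linner x y"
  and linner_scaleR_right: "linner x (c *\<^sub>R y) = c * linner x y"
  by (simp_all add: linner_def algebra_simps)

lemma lcross_nth: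
  "lcross a b $ 1 = a$2 * b$3 - a$3 * b$2"
  "lcross a b $ 2 = a$3 * b$1 - a$1 * b$3"
  "lcross a b $ 3 = -(a$1 * b$2 - a$2 * b$1)"
  by (simp_all add: lcross_def)

lemma linner_lcross_self: "linner (lcross x y) (lcross x y) = (linner x y)^2 - linner x x * linner y y"
  by (simp add: linner_def lcross_nth power2_eq_square) algebra

lemma linner_lcross_add_scaleR_self: "linner x (lcross (a *\<^sub>R x + y) (b *\<^sub>R x + z)) = linner x (lcross y z)"
  by (simp add: linner_def lcross_nth) algebra

lemma linner_lcross_square:
  "(linner x (lcross y z))^2 =
   - linner x x * (linner y y * linner z z - (linner y z)^2)
   + linner x y * (linner x y * linner z z - linner y z * linner x z)
   - linner x z * (linner x y * linner y z - linner y y * linner x z)"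
  by (simp add: linner_def lcross_nth power2_eq_square) algebra

lemma linner_lcross_orthonormal:
  assumes "linner N N = 1" "linner b2 b2 = 1" "linner b3 b3 = -1"
    and "linner N b2 = 0" "linner N b3 = 0" "linner b2 b3 = 0"
  shows "(linner N (lcross b2 b3))^2 = 1"
  by (simp add: linner_lcross_square assms)

lemma mean_curvature_eq_0_iff:
  fixes X :: "real \<times> real \<Rightarrow> real^3"
  assumes nondegenerate: "fundE X p * fundG X p - (fundF X p)^2 \<noteq> 0"
    and transversal: "linner v (lcross (pd True X p) (pd False X p)) \<noteq> 0"
    and "pd True (pd True X) p = r *\<^sub>R v" "pd True (pd False X) p = s *\<^sub>R v"
    and "pd False (pd False X) p = t *\<^sub>R v"
  shows "mean_curvature X p = 0 \<longleftrightarrow> r * fundG X p - 2 * s * fundF X p + t * fundE X p = 0"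
proof -
  define m where "m = lcross (pd True X p) (pd False X p)"
  define c where "c = 1 / sqrt \<bar>linner m m\<bar>"
  have "linner m m = (fundF X p)^2 - fundE X p * fundG X p"
    unfolding m_def fundE_def fundF_def fundG_def by (rule linner_lcross_self)
  with nondegenerate have "linner m m \<noteq> 0" by simp
  then have "c \<noteq> 0" by (simp add: c_def)
  have "unit_normal X p = c *\<^sub>R m" by (simp add: unit_normal_def m_def c_def Let_def)
  then have "mean_curvature X p = c^2 * linner m m * (c * linner v m)
      * (r * fundG X p - 2 * s * fundF X p + t * fundE X p) / (2 * (fundE X p * fundG X p - (fundF X p)^2))"
    unfolding mean_curvature_def Let_def assms(3-5)
    by (simp add: linner_scaleR_left linner_scaleR_right power2_eq_square algebra_simps)
  with nondegenerate transversal \<open>linner m m \<noteq> 0\<close> \<open>c \<noteq> 0\<close> show ?thesis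
    by (simp add: m_def)
qed

lemma fund_plane_graph:
  assumes "\<psi> differentiable (at p)"
    and "linner N N = 1" "linner b2 b2 = 1" "linner b3 b3 = -1"
    and "linner N b2 = 0" "linner N b3 = 0" "linner b2 b3 = 0"
  shows "fundE (plane_graph \<psi> N b2 b3) p = 1 + (pd True \<psi> p)^2"
    and "fundF (plane_graph \<psi> N b2 b3) p = pd True \<psi> p * pd False \<psi> p"
    and "fundG (plane_graph \<psi> N b2 b3) p = (pd False \<psi> p)^2 - 1"
  using assms
  by (simp_all add: fundE_def fundF_def fundG_def pd_plane_graph linner_add_left linner_add_right
      linner_scaleR_left linner_scaleR_right linner_commute[of b2 N] linner_commute[of b3 N]
      linner_commute[of b3 b2] power2_eq_square)

theorem lemma3p1:
  fixes U :: "(real \<times> real) set" and \<psi> :: "real \<times> real \<Rightarrow> real"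
    and N b2 b3 :: "real^3"
  assumes "open U"
    and "smooth_on2 U \<psi>"
    and "linner N N = 1" and "linner b2 b2 = 1" and "linner b3 b3 = -1"
    and "linner N b2 = 0" and "linner N b3 = 0" and "linner b2 b3 = 0"
    and "timelike_surface U (\<lambda>(x2, x3). \<psi> (x2, x3) *\<^sub>R N + x2 *\<^sub>R b2 + x3 *\<^sub>R b3)"
    and "minimal_surface U (\<lambda>(x2, x3). \<psi> (x2, x3) *\<^sub>R N + x2 *\<^sub>R b2 + x3 *\<^sub>R b3)"
  shows "born_infeld_soliton U \<psi>"
  unfolding born_infeld_soliton_def
proof
  fix p assume "p \<in> U"
  let ?X = "plane_graph \<psi> N b2 b3"
  have X: "(\<lambda>(x2, x3). \<psi> (x2, x3) *\<^sub>R N + x2 *\<^sub>R b2 + x3 *\<^sub>R b3) = ?X"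
    by (auto simp: plane_graph_def)
  have differentiable: "\<And>q. q \<in> U \<Longrightarrow> \<psi> differentiable (at q)"
    and pd_differentiable: "\<And>d q. q \<in> U \<Longrightarrow> pd d \<psi> differentiable (at q)"
    using assms(2) unfolding smooth_on2_def by (metis iter_pd.simps(1), metis iter_pd.simps)
  note fund = fund_plane_graph[OF differentiable[OF \<open>p \<in> U\<close>] assms(3-8)]
  have "fundE ?X p * fundG ?X p - (fundF ?X p)^2 \<noteq> 0"
    using assms(9) \<open>p \<in> U\<close> unfolding X timelike_surface_def by fastforce
  moreover have "linner N (lcross (pd True ?X p) (pd False ?X p)) \<noteq> 0"
    using linner_lcross_orthonormal[OF assms(3-8)] differentiable \<open>p \<in> U\<close>
    by (auto simp: pd_plane_graph linner_lcross_add_scaleR_self)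
  moreover have "mean_curvature ?X p = 0"
    using assms(10) \<open>p \<in> U\<close> unfolding X minimal_surface_def by blast
  moreover have "pd d' (pd d ?X) p = pd d' (pd d \<psi>) p *\<^sub>R N" for d d'
    by (intro pd_pd_plane_graph[OF assms(1) \<open>p \<in> U\<close>] differentiable pd_differentiable \<open>p \<in> U\<close>)
  ultimately have "pd True (pd True \<psi>) p * fundG ?X p - 2 * pd True (pd False \<psi>) p * fundF ?X p
      + pd False (pd False \<psi>) p * fundE ?X p = 0"
    using mean_curvature_eq_0_iff by blast
  then show "(1 - (pd False \<psi> p)^2) * pd True (pd True \<psi>) p
      + 2 * pd True \<psi> p * pd False \<psi> p * pd True (pd False \<psi>) p
      - (1 + (pd True \<psi> p)^2) * pd False (pd False \<psi>) p = 0"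
    unfolding fund by (simp add: algebra_simps)
qed

end
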